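(* Let $p=2^m$ with $p\ge4$ and let $D$ be the $p\times p$ orthonormal discrete Haar wavelet basis matrix (defined in the context). Let $s\ge\log_2 p$, suppose Assumptions 1 and 2 hold with $0\le\delta_s<1$, and suppose $$T\le\frac{(a_u-a_\ell)^2\log p}{4(1+\delta_s)}.$$ Then $$\inf_{\hat f}\ \sup_{f^*\in\mathcal{F}_{T,s,D}}\mathbb{E}\big[\|\hat f-f^*\|_2^2\big]\ \ge\ \frac18,$$ where the infimum is over all measurable estimators $\hat f$ of $f^*$ based on $y$.
   Context: Setup: $n,p\ge1$ integers, $T>0$. For an orthonormal $D\in\mathbb{R}^{p\times p}$ with first column $d_1=p^{-1/2}(1,\dots,1)^\top$, let $\bar D$ be $D$ with its first column removed and $\mathcal{F}_{T,s,D}=\{f\in\mathbb{R}^p_{\ge0}:\ \|f\|_1=1,\ \|\bar D^\top f\|_0\le s\}$, $\|v\|_0$ being the number of nonzero entries. Given $A\in\mathbb{R}^{n\times p}$ and $f^*\in\mathcal{F}_{T,s,D}$, the observation is $y=(y_1,\dots,y_n)$ with independent $y_i\sim\mathrm{Poisson}(T(Af^* )_i)$; expectation is over $y$; $\log$ is the natural logarithm. Discrete Haar wavelet basis of $\mathbb{R}^{2^m}$: its columns are $2^{-m/2}(1,\dots,1)^\top$ (the first column) together with, for each level $\ell\in\{0,\dots,m-1\}$ and shift $k\in\{0,\dots,2^\ell-1\}$, the vector $\psi_{\ell,k}$ whose entries equal $2^{(\ell-m)/2}$ at indices $k2^{m-\ell}+1,\dots,k2^{m-\ell}+2^{m-\ell-1}$,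 equal $-2^{(\ell-m)/2}$ at indices $k2^{m-\ell}+2^{m-\ell-1}+1,\dots,(k+1)2^{m-\ell}$, and are $0$ elsewhere. Assumption 1: there are constants $a_\ell<a_u$ and $\widetilde A\in\mathbb{R}^{n\times p}$ with all entries in $[a_\ell/\sqrt n,a_u/\sqrt n]$ such that $A=\big(\widetilde A+\frac{a_u-2a_\ell}{\sqrt n}\mathbb{1}_{n\times p}\big)/\big(2(a_u-a_\ell)\sqrt n\big)$, with $\mathbb{1}_{n\times p}$ the all-ones matrix. Assumption 2: there is $\delta_s\ge0$ such that $\|\widetilde A D u\|_2^2\le(1+\delta_s)\|u\|_2^2$ for all $u\in\mathbb{R}^p$ with $\|u\|_0\le 2s$. *)

theory Defs
  imports "HOL-Analysis.Analysis" "HOL-Probability.Probability"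
begin

text \<open>Conventions: vectors in R^k are functions nat => real, only indices 0..k-1 matter;
  matrices are nat => nat => real (row index first). Indices are 0-based.\<close>

text \<open>Discrete Haar wavelet basis matrix of R^(2^m); column 0 is the constant vector,
  column 2^l + k (0 <= l < m, 0 <= k < 2^l) is psi_{l,k}. Entry (i, j).\<close>
definition haar :: "nat \<Rightarrow> nat \<Rightarrow> nat \<Rightarrow> real" where
  "haar m i j =
     (if j = 0 then 2 powr (- real m / 2)
      else (let l = nat \<lfloor>log 2 (real j)\<rfloor>; k = j - 2 ^ l; w = 2 ^ (m - l); h = 2 ^ (m - l - 1) in
            if k * w \<le> i \<and> i < k * w + h then 2 powr ((real l - real m) / 2)
            else if k * w + h \<le> i \<and> i < (k + 1) * w then - (2 powr ((real l - real m) / 2))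
            else 0))"

definition mat_vec :: "nat \<Rightarrow> (nat \<Rightarrow> nat \<Rightarrow> real) \<Rightarrow> (nat \<Rightarrow> real) \<Rightarrow> nat \<Rightarrow> real" where
  "mat_vec p M v = (\<lambda>i. \<Sum>j<p. M i j * v j)"

definition sqnorm :: "nat \<Rightarrow> (nat \<Rightarrow> real) \<Rightarrow> real" where
  "sqnorm p v = (\<Sum>i<p. (v i)\<^sup>2)"

definition l0 :: "nat \<Rightarrow> (nat \<Rightarrow> real) \<Rightarrow> nat" where
  "l0 p v = card {i. i < p \<and> v i \<noteq> 0}"

definition fclass :: "nat \<Rightarrow> nat \<Rightarrow> (nat \<Rightarrow> nat \<Rightarrow> real) \<Rightarrow> (nat \<Rightarrow> real) set" where
  "fclass p s D = {f. (\<forall>j<p. 0 \<le> f j) \<and> (\<Sum>j<p. \<bar>f j\<bar>) = 1 \<and>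
       card {j. 1 \<le> j \<and> j < p \<and> (\<Sum>i<p. D i j * f i) \<noteq> 0} \<le> s}"

definition obs_pmf :: "nat \<Rightarrow> nat \<Rightarrow> real \<Rightarrow> (nat \<Rightarrow> nat \<Rightarrow> real) \<Rightarrow> (nat \<Rightarrow> real) \<Rightarrow> (nat \<Rightarrow> nat) pmf" where
  "obs_pmf n p T A f = Pi_pmf {..<n} 0 (\<lambda>i. poisson_pmf (T * mat_vec p A f i))"

definition risk :: "nat \<Rightarrow> nat \<Rightarrow> real \<Rightarrow> (nat \<Rightarrow> nat \<Rightarrow> real) \<Rightarrow> ((nat \<Rightarrow> nat) \<Rightarrow> nat \<Rightarrow> real)
     \<Rightarrow> (nat \<Rightarrow> real) \<Rightarrow> ennreal" where
  "risk n p T A fhat f =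
     (\<integral>\<^sup>+ y. ennreal (sqnorm p (\<lambda>j. fhat y j - f j)) \<partial>measure_pmf (obs_pmf n p T A f))"

end

(*
  Le Cam's method with p hypotheses. Each basis vector e_k lies in the class: row k of the Haar
  matrix has one nonzero detail coefficient per level, hence at most log2 p <= s of them. Moreover
  e_k - (1/p, ..., 1/p) is the Haar synthesis of exactly these coefficients, a vector of norm at most
  1, so the restricted isometry bound controls the Poisson chi-square distance between the law P_k
  of y under e_k and the law Q under the uniform vector: it is at most ln p / 8.

  By AM-GM, P_k(S) <= (c/2) Q(S) + E_{P_k}[dP_k/dQ] / (2c), and for Poisson products the expectation
  is exp of the chi-square distance, at most p/2. With c = p this gives P_k(S) <= (p/2) Q(S) + 1/4.
  An estimator with risk below 1/8 at every e_k would land within squared distance 1/2 of e_k with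
  P_k-probability above 3/4; these events are disjoint in k, so summing over k yields
  3p/4 < p/2 + p/4, a contradiction.
*)

theory Submission
  imports Defs
begin

lemma div_eq_iff_bounds: "0 < (h::nat) \<Longrightarrow> i div h = a \<longleftrightarrow> a * h \<le> i \<and> i < (a + 1) * h"
  by (metis Groups.mult_ac(2) div_nat_eqI div_times_less_eq_dividend
    dividend_less_div_times semiring_norm(174) times_nat.simps(2))

lemma nat_floor_log2_pow_plus: "k < 2 ^ l \<Longrightarrow> nat \<lfloor>log 2 (real (2 ^ l + k))\<rfloor> = l"
proof -
  assume "k < 2 ^ l"
  then have "\<lfloor>log (real 2) (real (2 ^ l + k))\<rfloor> = int l"
    by (intro floor_log_nat_eq_if) auto
  then show ?thesis by simp
qed

lemma haar_level:
  assumes "l < m" "k < 2 ^ l"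
  shows "haar m i (2 ^ l + k) =
    (if i div 2 ^ (m - l) = k then 2 powr ((real l - real m) / 2) * (-1) ^ (i div 2 ^ (m - l - 1)) else 0)"
proof -
  define h :: nat where "h = 2 ^ (m - l - 1)"
  have w: "(2::nat) ^ (m - l) = 2 * h"
    unfolding h_def using assms(1) by (metis Suc_diff_Suc diff_Suc_1 power_Suc)
  have "0 < h" by (simp add: h_def)
  define q where "q = i div h"
  have qw: "i div 2 ^ (m - l) = q div 2"
    unfolding w q_def by (simp add: div_mult2_eq mult.commute)
  have left_half: "(k * (2 * h) \<le> i \<and> i < k * (2 * h) + h) \<longleftrightarrow> q = 2 * k"
    unfolding q_def using div_eq_iff_bounds[OF \<open>0 < h\<close>, of i "2 * k"] by (auto simp: algebra_simps)
  have right_half: "(k * (2 * h) + h \<le> i \<and> i < (k + 1) * (2 * h)) \<longleftrightarrow> q = 2 * k + 1"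
    unfolding q_def using div_eq_iff_bounds[OF \<open>0 < h\<close>, of i "2 * k + 1"] by (auto simp: algebra_simps)
  have hh: "(2::nat) ^ (m - l - 1) = h" by (simp add: h_def)
  define c where "c = 2 powr ((real l - real m) / 2)"
  have "haar m i (2 ^ l + k) = (if k * (2 * h) \<le> i \<and> i < k * (2 * h) + h then c
      else if k * (2 * h) + h \<le> i \<and> i < (k + 1) * (2 * h) then - c else 0)"
    unfolding haar_def Let_def nat_floor_log2_pow_plus[OF assms(2)] c_def
    by (simp only: if_False w hh add_diff_cancel_left' add_is_0 power_not_zero zero_neq_numeral)
      simp
  then show ?thesis
    unfolding left_half right_half qw c_def[symmetric] hh q_def[symmetric]
    by (auto simp: minus_one_power_iff)
qed

lemma sum_lessThan_add: "(\<Sum>j < a + b. g j) = (\<Sum>j < a. g j) + (\<Sum>k < b. g (a + (k::nat)))"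
  by (induction b) (auto simp: algebra_simps)

lemma sum_lessThan_pow2_levels:
  "(\<Sum>j < (2::nat) ^ m. g j) = g 0 + (\<Sum>l < m. \<Sum>k < 2 ^ l. g (2 ^ l + k))"
proof (induction m)
  case 0
  have "{..<(1::nat)} = {0}" by auto
  then show ?case by simp
next
  case (Suc m)
  have "(\<Sum>j < 2 ^ Suc m. g j) = (\<Sum>j < 2 ^ m + 2 ^ m. g j)" by (simp add: mult_2)
  also have "\<dots> = (\<Sum>j < 2 ^ m. g j) + (\<Sum>k < 2 ^ m. g (2 ^ m + k))" by (rule sum_lessThan_add)
  finally show ?case using Suc by (simp add: add.assoc)
qed

lemma powr_half_mult_self:
  "2 powr ((real l - real m) / 2) * 2 powr ((real l - real m) / 2) = 2 ^ l / 2 ^ m"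
proof -
  have "2 powr ((real l - real m) / 2) * 2 powr ((real l - real m) / 2) = 2 powr (real l - real m)"
    by (simp flip: powr_add)
  also have "\<dots> = 2 ^ l / 2 ^ m" by (simp add: powr_diff powr_realpow)
  finally show ?thesis .
qed

lemma haar_level_inner:
  assumes "l < m" "i < 2 ^ m"
  shows "(\<Sum>k < 2 ^ l. haar m i (2 ^ l + k) * haar m i' (2 ^ l + k)) =
     (if i div 2 ^ (m - l) = i' div 2 ^ (m - l)
      then 2 ^ l / 2 ^ m * ((-1) ^ (i div 2 ^ (m - l - 1)) * (-1) ^ (i' div 2 ^ (m - l - 1))) else 0)"
proof -
  have "(2::nat) ^ m = 2 ^ l * 2 ^ (m - l)" using assms(1) by (simp flip: power_add)
  then have block: "i div 2 ^ (m - l) < 2 ^ l" using assms(2) by (simp add: less_mult_imp_div_less)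
  show ?thesis
    using block
    by (simp add: haar_level[OF assms(1)] if_distrib[of "\<lambda>x. x * _"] mult_ac powr_half_mult_self
        sum.delta eq_commute cong: if_cong)
qed

text \<open>Up to the factor 2^m, the inner product of rows i and i' of haar m with column 0
  removed. Halving i and i' peels off the finest level, which gives an induction on m.\<close>
definition haar_detail_kernel :: "nat \<Rightarrow> nat \<Rightarrow> nat \<Rightarrow> real" where
  "haar_detail_kernel m i i' = (\<Sum>l < m. if i div 2 ^ (m - l) = i' div 2 ^ (m - l)
      then 2 ^ l * ((-1) ^ (i div 2 ^ (m - l - 1)) * (-1) ^ (i' div 2 ^ (m - l - 1))) else 0)"

lemma haar_detail_kernel_Suc:
  "haar_detail_kernel (Suc m) i i' = haar_detail_kernel m (i div 2) (i' div 2) +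
     (if i div 2 = i' div 2 then 2 ^ m * ((-1) ^ i * (-1) ^ i') else 0)"
proof -
  have halve: "i div 2 ^ (Suc m - l) = (i div 2) div 2 ^ (m - l)"
    "i div 2 ^ (Suc m - l - 1) = (i div 2) div 2 ^ (m - l - 1)" if "l < m" for i l :: nat
  proof -
    show "i div 2 ^ (Suc m - l) = (i div 2) div 2 ^ (m - l)"
      using that by (simp add: Suc_diff_le div_mult2_eq)
    have "(2::nat) ^ (m - l) = 2 * 2 ^ (m - l - 1)"
      using that by (metis Suc_diff_Suc diff_Suc_1 power_Suc)
    moreover have "Suc m - l - 1 = m - l" using that by simp
    ultimately show "i div 2 ^ (Suc m - l - 1) = (i div 2) div 2 ^ (m - l - 1)"
      by (simp add: div_mult2_eq)
  qed
  show ?thesis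
    unfolding haar_detail_kernel_def sum.lessThan_Suc
    by (intro arg_cong2[where f = "(+)"] sum.cong refl) (simp only: lessThan_iff halve, simp)
qed

lemma haar_detail_kernel_eq:
  "i div 2 ^ m = i' div 2 ^ m \<Longrightarrow> haar_detail_kernel m i i' = (if i = i' then 2 ^ m - 1 else -1)"
proof (induction m arbitrary: i i')
  case 0
  then show ?case by (simp add: haar_detail_kernel_def)
next
  case (Suc m)
  have IH: "haar_detail_kernel m (i div 2) (i' div 2) = (if i div 2 = i' div 2 then 2 ^ m - 1 else -1)"
    by (rule Suc.IH) (use Suc.prems in \<open>simp add: div_mult2_eq\<close>)
  show ?case
  proof (cases "i div 2 = i' div 2")
    case True
    moreover have "(-1::real) ^ i * (-1) ^ i' = (if i = i' then 1 else -1)"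
    proof -
      have "odd (i + i')" if "i \<noteq> i'" using True that by presburger
      then show ?thesis by (auto simp flip: power_add)
    qed
    ultimately show ?thesis unfolding haar_detail_kernel_Suc IH by simp
  next
    case False
    then show ?thesis unfolding haar_detail_kernel_Suc IH by auto
  qed
qed

lemma haar_col0_mult: "haar m i 0 * haar m i' 0 = 1 / 2 ^ m"
  using powr_half_mult_self[of 0 m] by (simp add: haar_def)

lemma haar_rows_orthonormal:
  assumes "i < 2 ^ m" "i' < 2 ^ m"
  shows "(\<Sum>j < 2 ^ m. haar m i j * haar m i' j) = (if i = i' then 1 else 0)"
proof -
  have "(\<Sum>j < 2 ^ m. haar m i j * haar m i' j)
      = 1 / 2 ^ m + (\<Sum>l < m. \<Sum>k < 2 ^ l. haar m i (2 ^ l + k) * haar m i' (2 ^ l + k))"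
    by (subst sum_lessThan_pow2_levels) (simp add: haar_col0_mult)
  also have "(\<Sum>l < m. \<Sum>k < 2 ^ l. haar m i (2 ^ l + k) * haar m i' (2 ^ l + k))
      = haar_detail_kernel m i i' / 2 ^ m"
    unfolding haar_detail_kernel_def sum_divide_distrib
    by (intro sum.cong refl) (simp add: haar_level_inner assms)
  also have "haar_detail_kernel m i i' = (if i = i' then 2 ^ m - 1 else -1)"
    by (rule haar_detail_kernel_eq) (use assms in simp)
  finally show ?thesis by (cases "i = i'") (simp_all add: field_simps)
qed

lemma pow2_level_decomp: "1 \<le> j \<Longrightarrow> j < 2 ^ m \<Longrightarrow> \<exists>l<m. \<exists>r<2 ^ l. j = 2 ^ l + (r::nat)"
proof (induction m)
  case 0
  then show ?case by simp
next
  case (Suc m)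
  show ?case
  proof (cases "j < 2 ^ m")
    case True
    then show ?thesis using Suc by (meson less_SucI)
  next
    case False
    then show ?thesis using Suc.prems by (intro exI[of _ m]) (auto intro: exI[of _ "j - 2 ^ m"])
  qed
qed

lemma card_haar_row_support:
  assumes "k < 2 ^ m"
  shows "card {j. 1 \<le> j \<and> j < 2 ^ m \<and> haar m k j \<noteq> 0} \<le> m"
proof -
  have "{j. 1 \<le> j \<and> j < 2 ^ m \<and> haar m k j \<noteq> 0} \<subseteq> (\<lambda>l. 2 ^ l + k div 2 ^ (m - l)) ` {..<m}"
  proof
    fix j assume "j \<in> {j. 1 \<le> j \<and> j < 2 ^ m \<and> haar m k j \<noteq> 0}"
    then have j: "1 \<le> j" "j < 2 ^ m" "haar m k j \<noteq> 0" by auto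
    obtain l r where lr: "l < m" "r < 2 ^ l" "j = 2 ^ l + r" using pow2_level_decomp[OF j(1,2)] by blast
    have "k div 2 ^ (m - l) = r"
      using j(3) unfolding lr(3) haar_level[OF lr(1,2)] by (auto split: if_splits)
    then show "j \<in> (\<lambda>l. 2 ^ l + k div 2 ^ (m - l)) ` {..<m}" using lr by auto
  qed
  then have "card {j. 1 \<le> j \<and> j < 2 ^ m \<and> haar m k j \<noteq> 0} \<le> card ((\<lambda>l. 2 ^ l + k div 2 ^ (m - l)) ` {..<m})"
    by (intro card_mono) auto
  also have "\<dots> \<le> m" using card_image_le[of "{..<m}"] by simp
  finally show ?thesis .
qed

lemma nn_integral_exp_series:
  assumes "0 \<le> c"
  shows "(\<integral>\<^sup>+ (x::nat). ennreal (c ^ x / fact x) \<partial>count_space UNIV) = ennreal (exp c)"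
proof -
  have exp_sums: "(\<lambda>n. c ^ n / fact n) sums exp c"
    using exp_converges[of c] by (simp add: divide_inverse mult.commute)
  then have "summable (\<lambda>x::nat. c ^ x / fact x)" by (rule sums_summable)
  then have "(\<integral>\<^sup>+ (x::nat). ennreal (c ^ x / fact x) \<partial>count_space UNIV) = ennreal (\<Sum>x. c ^ x / fact x)"
    using assms by (simp add: nn_integral_count_space_nat suminf_ennreal ennreal_suminf_neq_top)
  also have "(\<Sum>x. c ^ x / fact x) = exp c" using exp_sums by (rule sums_unique[symmetric])
  finally show ?thesis .
qed

lemma nn_integral_poisson_likelihood_ratio:
  assumes a: "0 < a" and b: "0 < b"
  shows "(\<integral>\<^sup>+ t. ennreal (pmf (poisson_pmf a) t / pmf (poisson_pmf b) t) \<partial>measure_pmf (poisson_pmf a))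
         = ennreal (exp ((a - b)\<^sup>2 / b))"
proof -
  have density: "ennreal (pmf (poisson_pmf a) t) * ennreal (pmf (poisson_pmf a) t / pmf (poisson_pmf b) t)
      = ennreal ((a\<^sup>2 / b) ^ t / fact t) * ennreal (exp (b - 2 * a))" for t
  proof -
    have e: "exp (b - 2 * a) = exp (- a) * exp (- a) / exp (- b)"
      by (simp only: exp_diff[symmetric] exp_add[symmetric]) simp
    have q: "(a\<^sup>2 / b) ^ t = a ^ t * a ^ t / b ^ t"
      by (simp add: power_divide power2_eq_square power_mult_distrib)
    have "fact t > (0::real)" by simp
    then have "pmf (poisson_pmf a) t * (pmf (poisson_pmf a) t / pmf (poisson_pmf b) t)
        = (a\<^sup>2 / b) ^ t / fact t * exp (b - 2 * a)"
      unfolding e q pmf_poisson[OF a] pmf_poisson[OF b] using a b by (simp add: field_simps)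
    then show ?thesis using a b by (simp add: ennreal_mult''[symmetric] del: pmf_poisson)
  qed
  have "(\<integral>\<^sup>+ t. ennreal (pmf (poisson_pmf a) t / pmf (poisson_pmf b) t) \<partial>measure_pmf (poisson_pmf a))
      = (\<integral>\<^sup>+ t. ennreal ((a\<^sup>2 / b) ^ t / fact t) * ennreal (exp (b - 2 * a)) \<partial>count_space UNIV)"
    unfolding nn_integral_measure_pmf density ..
  also have "\<dots> = ennreal (exp (a\<^sup>2 / b)) * ennreal (exp (b - 2 * a))"
    using a b by (simp add: nn_integral_multc nn_integral_exp_series)
  also have "\<dots> = ennreal (exp ((a - b)\<^sup>2 / b))"
  proof -
    have "exp (a\<^sup>2 / b) * exp (b - 2 * a) = exp ((a - b)\<^sup>2 / b)"
      using b by (simp add: exp_add[symmetric] power2_eq_square field_simps)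
    then show ?thesis by (simp add: ennreal_mult''[symmetric])
  qed
  finally show ?thesis .
qed

lemma pmf_Pi_poisson_pos:
  assumes "finite I" "\<forall>i\<in>I. 0 < b i" "\<forall>x. x \<notin> I \<longrightarrow> y x = 0"
  shows "0 < pmf (Pi_pmf I 0 (\<lambda>i. poisson_pmf (b i))) y"
  using assms unfolding pmf_Pi[OF assms(1)] by (auto intro!: prod_pos)

lemma nn_integral_Pi_poisson_likelihood_ratio:
  fixes I :: "'i set" and a b :: "'i \<Rightarrow> real"
  defines "P \<equiv> Pi_pmf I 0 (\<lambda>i. poisson_pmf (a i))" and "Q \<equiv> Pi_pmf I 0 (\<lambda>i. poisson_pmf (b i))"
  assumes I: "finite I" and a: "\<forall>i\<in>I. 0 < a i" and b: "\<forall>i\<in>I. 0 < b i"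
  shows "(\<integral>\<^sup>+ y. ennreal (pmf P y / pmf Q y) \<partial>measure_pmf P) = ennreal (exp (\<Sum>i\<in>I. (a i - b i)\<^sup>2 / b i))"
proof -
  have ratio: "pmf P y / pmf Q y = (\<Prod>i\<in>I. pmf (poisson_pmf (a i)) (y i) / pmf (poisson_pmf (b i)) (y i))"
    if "y \<in> set_pmf P" for y
  proof -
    have "y \<in> {f. \<forall>x. x \<notin> I \<longrightarrow> f x = 0}"
      using set_Pi_pmf_subset[OF I] that unfolding P_def by (rule subsetD)
    then have supp: "\<forall>x. x \<notin> I \<longrightarrow> y x = 0" by simp
    show ?thesis unfolding P_def Q_def pmf_Pi[OF I] if_P[OF supp] by (rule prod_dividef[symmetric])
  qed
  have "(\<integral>\<^sup>+ y. ennreal (pmf P y / pmf Q y) \<partial>measure_pmf P)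
      = (\<integral>\<^sup>+ y. (\<Prod>i\<in>I. ennreal (pmf (poisson_pmf (a i)) (y i) / pmf (poisson_pmf (b i)) (y i))) \<partial>measure_pmf P)"
    by (intro nn_integral_cong_AE AE_pmfI) (simp only: ratio, rule prod_ennreal[symmetric], simp)
  also have "\<dots> = (\<Prod>i\<in>I. \<integral>\<^sup>+ t. ennreal (pmf (poisson_pmf (a i)) t / pmf (poisson_pmf (b i)) t)
      \<partial>measure_pmf (poisson_pmf (a i)))"
    unfolding P_def by (rule nn_integral_prod_Pi_pmf[OF I])
  also have "\<dots> = (\<Prod>i\<in>I. ennreal (exp ((a i - b i)\<^sup>2 / b i)))"
    using a b by (intro prod.cong refl nn_integral_poisson_likelihood_ratio) auto
  also have "\<dots> = ennreal (exp (\<Sum>i\<in>I. (a i - b i)\<^sup>2 / b i))"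
    unfolding exp_sum[OF I] by (rule prod_ennreal) auto
  finally show ?thesis .
qed

lemma measure_pmf_le_likelihood_ratio:
  fixes P Q :: "'a pmf" and c X :: real
  assumes c: "0 < c" and abs_cont: "set_pmf P \<subseteq> set_pmf Q" and X: "0 \<le> X"
    and ratio: "(\<integral>\<^sup>+ y. ennreal (pmf P y / pmf Q y) \<partial>measure_pmf P) = ennreal X"
  shows "measure P S \<le> c / 2 * measure Q S + X / (2 * c)"
proof -
  define r where "r y = pmf P y / pmf Q y" for y
  have pointwise: "pmf P y \<le> c / 2 * pmf Q y + 1 / (2 * c) * (pmf P y * r y)" for y
  proof (cases "pmf P y = 0")
    case True
    then show ?thesis using c by simp
  next
    case False
    then have Q_pos: "0 < pmf Q y" using abs_cont by (auto simp: set_pmf_iff pmf_nonneg order_less_le)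
    \<comment> \<open>AM-GM: the slack is a square.\<close>
    have "c / 2 * pmf Q y + 1 / (2 * c) * (pmf P y * r y) - pmf P y
        = (c * pmf Q y - pmf P y)\<^sup>2 / (2 * c * pmf Q y)"
      using Q_pos c unfolding r_def by (simp add: field_simps power2_eq_square)
    moreover have "0 \<le> (c * pmf Q y - pmf P y)\<^sup>2 / (2 * c * pmf Q y)" using Q_pos c by simp
    ultimately show ?thesis by linarith
  qed
  have pointwise_S: "ennreal (pmf P y) * indicator S y \<le>
      ennreal (c / 2) * (ennreal (pmf Q y) * indicator S y) + ennreal (1 / (2 * c)) * (ennreal (pmf P y) * ennreal (r y))" for y
  proof (cases "y \<in> S")
    case True
    have "ennreal (pmf P y) \<le> ennreal (c / 2 * pmf Q y + 1 / (2 * c) * (pmf P y * r y))"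
      using pointwise by (rule ennreal_leI)
    also have "\<dots> = ennreal (c / 2) * ennreal (pmf Q y) + ennreal (1 / (2 * c)) * (ennreal (pmf P y) * ennreal (r y))"
      using c by (simp add: r_def ennreal_plus ennreal_mult[symmetric] del: ennreal_plus_if)
    finally show ?thesis using True by simp
  qed simp
  have "emeasure (measure_pmf P) S = (\<integral>\<^sup>+ y. ennreal (pmf P y) * indicator S y \<partial>count_space UNIV)"
    by (simp flip: nn_integral_measure_pmf)
  also have "\<dots> \<le> (\<integral>\<^sup>+ y. ennreal (c / 2) * (ennreal (pmf Q y) * indicator S y)
      + ennreal (1 / (2 * c)) * (ennreal (pmf P y) * ennreal (r y)) \<partial>count_space UNIV)"
    by (intro nn_integral_mono pointwise_S)
  also have "\<dots> = ennreal (c / 2) * (\<integral>\<^sup>+ y. ennreal (pmf Q y) * indicator S y \<partial>count_space UNIV)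
      + ennreal (1 / (2 * c)) * (\<integral>\<^sup>+ y. ennreal (pmf P y) * ennreal (r y) \<partial>count_space UNIV)"
    by (simp add: nn_integral_add nn_integral_cmult)
  also have "(\<integral>\<^sup>+ y. ennreal (pmf Q y) * indicator S y \<partial>count_space UNIV) = emeasure (measure_pmf Q) S"
    by (simp flip: nn_integral_measure_pmf)
  also have "(\<integral>\<^sup>+ y. ennreal (pmf P y) * ennreal (r y) \<partial>count_space UNIV) = ennreal X"
    unfolding r_def by (simp flip: nn_integral_measure_pmf ratio)
  finally have "emeasure (measure_pmf P) S
      \<le> ennreal (c / 2) * emeasure (measure_pmf Q) S + ennreal (1 / (2 * c)) * ennreal X" .
  also have "\<dots> = ennreal (c / 2 * measure Q S + X / (2 * c))"
    using c X by (simp add: measure_pmf.emeasure_eq_measure ennreal_plus ennreal_mult[symmetric] del: ennreal_plus_if)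
  finally have "ennreal (measure P S) \<le> ennreal (c / 2 * measure Q S + X / (2 * c))"
    by (simp add: measure_pmf.emeasure_eq_measure)
  moreover have "0 \<le> c / 2 * measure Q S + X / (2 * c)" using c X by simp
  ultimately show ?thesis by (simp add: ennreal_le_iff)
qed

lemma measure_Pi_poisson_le:
  fixes I :: "'i set" and a b :: "'i \<Rightarrow> real" and c :: real
  assumes I: "finite I" and a: "\<forall>i\<in>I. 0 < a i" and b: "\<forall>i\<in>I. 0 < b i" and c: "0 < c"
  shows "measure (Pi_pmf I 0 (\<lambda>i. poisson_pmf (a i))) S
     \<le> c / 2 * measure (Pi_pmf I 0 (\<lambda>i. poisson_pmf (b i))) S + exp (\<Sum>i\<in>I. (a i - b i)\<^sup>2 / b i) / (2 * c)"
proof (rule measure_pmf_le_likelihood_ratio[OF c _ _ nn_integral_Pi_poisson_likelihood_ratio[OF I a b]])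
  show "set_pmf (Pi_pmf I 0 (\<lambda>i. poisson_pmf (a i))) \<subseteq> set_pmf (Pi_pmf I 0 (\<lambda>i. poisson_pmf (b i)))"
  proof
    fix y assume "y \<in> set_pmf (Pi_pmf I 0 (\<lambda>i. poisson_pmf (a i)))"
    then have "y \<in> {f. \<forall>x. x \<notin> I \<longrightarrow> f x = 0}" using set_Pi_pmf_subset[OF I] by (rule rev_subsetD)
    then have "0 < pmf (Pi_pmf I 0 (\<lambda>i. poisson_pmf (b i))) y" using I b by (intro pmf_Pi_poisson_pos) auto
    then show "y \<in> set_pmf (Pi_pmf I 0 (\<lambda>i. poisson_pmf (b i)))" by (simp add: set_pmf_iff)
  qed
qed simp

definition basis_vec :: "nat \<Rightarrow> nat \<Rightarrow> real" where
  "basis_vec k j = (if j = k then 1 else 0)"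

lemma sqnorm_basis_vec_separation:
  fixes v :: "nat \<Rightarrow> real"
  assumes "k < p" "k' < p" "k \<noteq> k'"
  shows "1 \<le> sqnorm p (\<lambda>j. v j - basis_vec k j) + sqnorm p (\<lambda>j. v j - basis_vec k' j)"
proof -
  have parallelogram: "(a - b)\<^sup>2 \<le> 2 * (x - a)\<^sup>2 + 2 * (x - b)\<^sup>2" for x a b :: real
  proof -
    have "2 * (x - a)\<^sup>2 + 2 * (x - b)\<^sup>2 - (a - b)\<^sup>2 = (2 * x - a - b)\<^sup>2"
      by (simp add: power2_eq_square algebra_simps)
    then show ?thesis by (metis diff_ge_0_iff_ge zero_le_power2)
  qed
  have "(basis_vec k j - basis_vec k' j)\<^sup>2 = basis_vec k j + basis_vec k' j" for j
    using assms(3) by (simp add: basis_vec_def)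
  then have "2 = (\<Sum>j<p. (basis_vec k j - basis_vec k' j)\<^sup>2)"
    using assms(1,2) by (simp add: sum.distrib basis_vec_def)
  also have "\<dots> \<le> (\<Sum>j<p. 2 * (v j - basis_vec k j)\<^sup>2 + 2 * (v j - basis_vec k' j)\<^sup>2)"
    by (intro sum_mono parallelogram)
  also have "\<dots> = 2 * (sqnorm p (\<lambda>j. v j - basis_vec k j) + sqnorm p (\<lambda>j. v j - basis_vec k' j))"
    unfolding sqnorm_def by (simp add: sum.distrib sum_distrib_left)
  finally show ?thesis by simp
qed

lemma measure_pmf_sublevel_gt:
  fixes P :: "'a pmf" and L :: "'a \<Rightarrow> real"
  assumes t: "0 < t" and small: "(\<integral>\<^sup>+ y. ennreal (L y) \<partial>measure_pmf P) < ennreal (t * \<epsilon>)"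
  shows "1 - \<epsilon> < measure P {y. L y < t}"
proof -
  define A where "A = {y. L y < t}"
  have "(\<integral>\<^sup>+ y. ennreal t * indicator (- A) y \<partial>measure_pmf P) \<le> (\<integral>\<^sup>+ y. ennreal (L y) \<partial>measure_pmf P)"
    by (intro nn_integral_mono) (auto simp: A_def ennreal_leI split: split_indicator)
  moreover have "emeasure (measure_pmf P) (- A) = ennreal (1 - measure P A)"
    using measure_pmf.prob_compl[of A P]
    by (simp add: measure_pmf.emeasure_eq_measure Compl_eq_Diff_UNIV)
  ultimately have "ennreal (t * (1 - measure P A)) < ennreal (t * \<epsilon>)"
    using small t by (simp add: nn_integral_cmult_indicator ennreal_mult)
  then have "t * (1 - measure P A) < t * \<epsilon>"
    using measure_pmf.prob_le_1[of P A] t by (simp add: ennreal_less_iff)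
  then show ?thesis unfolding A_def using t by simp
qed

lemma minimax_lower_bound_change_of_measure:
  fixes P :: "nat \<Rightarrow> 'a pmf" and Q :: "'a pmf" and fhat :: "'a \<Rightarrow> nat \<Rightarrow> real"
  assumes p: "0 < p"
    and change: "\<And>k S. k < p \<Longrightarrow> measure (P k) S \<le> real p / 2 * measure Q S + 1 / 4"
  shows "\<exists>k<p. 1 / 8 \<le> (\<integral>\<^sup>+ y. ennreal (sqnorm p (\<lambda>j. fhat y j - basis_vec k j)) \<partial>measure_pmf (P k))"
proof (rule ccontr)
  assume "\<not> ?thesis"
  then have risk_small: "(\<integral>\<^sup>+ y. ennreal (sqnorm p (\<lambda>j. fhat y j - basis_vec k j)) \<partial>measure_pmf (P k))
      < ennreal (1 / 2 * (1 / 4))" if "k < p" for k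
    using that by (auto simp: not_le divide_ennreal[symmetric])
  define A where "A k = {y. sqnorm p (\<lambda>j. fhat y j - basis_vec k j) < 1 / 2}" for k
  have likely: "3 / 4 < measure (P k) (A k)" if "k < p" for k
    using measure_pmf_sublevel_gt[OF _ risk_small[OF that]] unfolding A_def by simp
  have "disjoint_family_on A {..<p}"
    unfolding disjoint_family_on_def
  proof (intro ballI impI)
    fix k k' assume "k \<in> {..<p}" "k' \<in> {..<p}" "k \<noteq> k'"
    then have sep: "1 \<le> sqnorm p (\<lambda>j. fhat y j - basis_vec k j) + sqnorm p (\<lambda>j. fhat y j - basis_vec k' j)" for y
      by (intro sqnorm_basis_vec_separation) auto
    have "\<not> (sqnorm p (\<lambda>j. fhat y j - basis_vec k j) < 1 / 2 \<and> sqnorm p (\<lambda>j. fhat y j - basis_vec k' j) < 1 / 2)" for y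
      using sep[of y] by linarith
    then show "A k \<inter> A k' = {}" unfolding A_def by blast
  qed
  then have "(\<Sum>k<p. measure Q (A k)) = measure Q (\<Union>k<p. A k)"
    by (intro measure_pmf.finite_measure_finite_Union[symmetric]) auto
  also have "\<dots> \<le> 1" by (rule measure_pmf.prob_le_1)
  finally have disjoint_sum: "(\<Sum>k<p. measure Q (A k)) \<le> 1" .
  have "(\<Sum>k<p. 3 / 4) < (\<Sum>k<p. measure (P k) (A k))"
    using p likely by (intro sum_strict_mono) auto
  also have "\<dots> \<le> (\<Sum>k<p. real p / 2 * measure Q (A k) + 1 / 4)"
    using change by (intro sum_mono) auto
  also have "\<dots> = real p / 2 * (\<Sum>k<p. measure Q (A k)) + real p / 4"
    by (simp add: sum.distrib sum_distrib_left)
  also have "\<dots> \<le> real p / 2 + real p / 4"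
    using disjoint_sum by (simp add: mult_left_le)
  finally show False by simp
qed

lemma haar_basis_vec_in_fclass:
  assumes "m \<le> s" "k < 2 ^ m"
  shows "basis_vec k \<in> fclass (2 ^ m) s (haar m)"
proof -
  have "(\<Sum>i < 2 ^ m. haar m i j * basis_vec k i) = haar m k j" for j
    using assms(2) by (simp add: basis_vec_def if_distrib cong: if_cong)
  then have "card {j. 1 \<le> j \<and> j < 2 ^ m \<and> (\<Sum>i < 2 ^ m. haar m i j * basis_vec k i) \<noteq> 0} \<le> m"
    using card_haar_row_support[OF assms(2)] by simp
  then show ?thesis
    using assms by (simp add: fclass_def basis_vec_def)
qed

lemma haar_basis_vec_minus_uniform:
  assumes k: "k < 2 ^ m"
  obtains u where "l0 (2 ^ m) u \<le> m" "sqnorm (2 ^ m) u \<le> 1"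
    "\<And>i. i < 2 ^ m \<Longrightarrow> mat_vec (2 ^ m) (haar m) u i = basis_vec k i - 1 / 2 ^ m"
proof
  define u where "u j = (if j = 0 then 0 else haar m k j)" for j
  have "{j. j < 2 ^ m \<and> u j \<noteq> 0} = {j. 1 \<le> j \<and> j < 2 ^ m \<and> haar m k j \<noteq> 0}"
    unfolding u_def by auto
  then show "l0 (2 ^ m) u \<le> m"
    unfolding l0_def using card_haar_row_support[OF k] by simp
  have "sqnorm (2 ^ m) u \<le> (\<Sum>j < 2 ^ m. haar m k j * haar m k j)"
    unfolding sqnorm_def u_def by (intro sum_mono) (auto simp: power2_eq_square)
  also have "\<dots> = 1" using haar_rows_orthonormal[OF k k] by simp
  finally show "sqnorm (2 ^ m) u \<le> 1" .
  fix i :: nat assume i: "i < 2 ^ m"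
  have "(\<lambda>j. haar m i j * u j) = (\<lambda>j. haar m i j * haar m k j - (if j = 0 then haar m i 0 * haar m k 0 else 0))"
    unfolding u_def by (rule ext) auto
  then have "mat_vec (2 ^ m) (haar m) u i = (\<Sum>j < 2 ^ m. haar m i j * haar m k j) - haar m i 0 * haar m k 0"
    unfolding mat_vec_def by (simp only:) (simp add: sum_subtractf)
  then show "mat_vec (2 ^ m) (haar m) u i = basis_vec k i - 1 / 2 ^ m"
    using haar_rows_orthonormal[OF i k] by (simp add: haar_col0_mult basis_vec_def)
qed

lemma mat_vec_ge_of_stochastic:
  assumes "\<forall>j<p. c \<le> M i j" "\<forall>j<p. 0 \<le> f j" "(\<Sum>j<p. f j) = 1"
  shows "c \<le> mat_vec p M f i"
proof -
  have "(\<Sum>j<p. c * f j) \<le> (\<Sum>j<p. M i j * f j)"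
    using assms(1,2) by (intro sum_mono mult_right_mono) auto
  then show ?thesis
    unfolding mat_vec_def by (simp add: assms(3) flip: sum_distrib_left)
qed

lemma design_entry_ge:
  fixes a_l a_u :: real
  assumes n: "n \<ge> 1" and a_lt: "a_l < a_u" and At: "a_l / sqrt n \<le> At"
  shows "1 / (2 * real n) \<le> (At + (a_u - 2 * a_l) / sqrt n) / (2 * (a_u - a_l) * sqrt n)"
proof -
  have rn: "0 < sqrt (real n)" "sqrt (real n) * sqrt (real n) = real n" using n by auto
  have cancel: "d / r / (2 * d * r) = 1 / (2 * (r * r))" if "d \<noteq> 0" "r \<noteq> 0" for d r :: real
    using that by (simp add: field_simps)
  have "a_l / sqrt n + (a_u - 2 * a_l) / sqrt n = (a_u - a_l) / sqrt n"
    by (simp add: add_divide_distrib[symmetric])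
  then have "(a_u - a_l) / sqrt n \<le> At + (a_u - 2 * a_l) / sqrt n"
    using At by linarith
  then have "(a_u - a_l) / sqrt n / (2 * (a_u - a_l) * sqrt n)
      \<le> (At + (a_u - 2 * a_l) / sqrt n) / (2 * (a_u - a_l) * sqrt n)"
    using a_lt rn by (intro divide_right_mono) auto
  moreover have "(a_u - a_l) / sqrt n / (2 * (a_u - a_l) * sqrt n) = 1 / (2 * (sqrt n * sqrt n))"
    by (rule cancel) (use a_lt rn(1) in auto)
  ultimately show ?thesis using rn(2) by simp
qed

lemma design_mat_vec_centered:
  fixes a_l a_u :: real
  assumes A_row: "\<forall>j<p. A i j = (At i j + (a_u - 2 * a_l) / sqrt n) / (2 * (a_u - a_l) * sqrt n)"
    and centered: "(\<Sum>j<p. w j) = 0"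
  shows "mat_vec p A w i = mat_vec p At w i / (2 * (a_u - a_l) * sqrt n)"
proof -
  have "mat_vec p A w i = (\<Sum>j<p. (At i j * w j + (a_u - 2 * a_l) / sqrt n * w j) / (2 * (a_u - a_l) * sqrt n))"
    unfolding mat_vec_def using A_row by (intro sum.cong refl) (simp add: add_divide_distrib ring_distribs)
  also have "\<dots> = (mat_vec p At w i + (a_u - 2 * a_l) / sqrt n * (\<Sum>j<p. w j)) / (2 * (a_u - a_l) * sqrt n)"
    unfolding mat_vec_def by (simp add: sum_divide_distrib[symmetric] sum.distrib sum_distrib_left)
  finally show ?thesis using centered by simp
qed

lemma design_mat_vec_ge:
  fixes a_l a_u :: real
  assumes n: "n \<ge> 1" and a_lt: "a_l < a_u" and i: "i < n"
    and At_bounds: "\<forall>i<n. \<forall>j<p. a_l / sqrt n \<le> At i j \<and> At i j \<le> a_u / sqrt n"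
    and A_def: "\<forall>i<n. \<forall>j<p. A i j = (At i j + (a_u - 2 * a_l) / sqrt n) / (2 * (a_u - a_l) * sqrt n)"
    and g: "\<forall>j<p. 0 \<le> g j" "(\<Sum>j<p. g j) = 1"
  shows "1 / (2 * real n) \<le> mat_vec p A g i"
proof -
  have "\<forall>j<p. 1 / (2 * real n) \<le> A i j"
    using design_entry_ge[OF n a_lt] At_bounds A_def i by simp
  then show ?thesis using g by (rule mat_vec_ge_of_stochastic)
qed

lemma poisson_rates_chi_square_le:
  fixes a_l a_u T :: real and A At :: "nat \<Rightarrow> nat \<Rightarrow> real" and f g :: "nat \<Rightarrow> real"
  assumes n: "n \<ge> 1" and a_lt: "a_l < a_u" and T: "0 < T"
    and At_bounds: "\<forall>i<n. \<forall>j<p. a_l / sqrt n \<le> At i j \<and> At i j \<le> a_u / sqrt n"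
    and A_def: "\<forall>i<n. \<forall>j<p. A i j = (At i j + (a_u - 2 * a_l) / sqrt n) / (2 * (a_u - a_l) * sqrt n)"
    and f: "\<forall>j<p. 0 \<le> f j" "(\<Sum>j<p. f j) = 1" and g: "(\<Sum>j<p. g j) = 1"
  shows "(\<Sum>i<n. (T * mat_vec p A g i - T * mat_vec p A f i)\<^sup>2 / (T * mat_vec p A f i))
     \<le> T / (2 * (a_u - a_l)\<^sup>2) * sqnorm n (mat_vec p At (\<lambda>j. g j - f j))"
proof -
  define w where "w j = g j - f j" for j
  define d where "d = a_u - a_l"
  have rn: "0 < sqrt (real n)" "sqrt (real n) * sqrt (real n) = real n" using n by auto
  have term_le: "(T * mat_vec p A g i - T * mat_vec p A f i)\<^sup>2 / (T * mat_vec p A f i)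
      \<le> T / (2 * d\<^sup>2) * (mat_vec p At w i)\<^sup>2" if i: "i < n" for i
  proof -
    from mult_left_mono[OF design_mat_vec_ge[OF n a_lt i At_bounds A_def f], of T] have mu: "T / (2 * real n) \<le> T * mat_vec p A f i"
      using T by simp
    have "(\<Sum>j<p. w j) = 0" using f(2) g by (simp add: w_def sum_subtractf)
    then have "mat_vec p A w i = mat_vec p At w i / (2 * d * sqrt n)"
      unfolding d_def using A_def i by (intro design_mat_vec_centered) auto
    moreover have "T * mat_vec p A g i - T * mat_vec p A f i = T * mat_vec p A w i"
      by (simp add: mat_vec_def w_def sum_subtractf right_diff_distrib flip: sum_distrib_left)
    ultimately have diff: "T * mat_vec p A g i - T * mat_vec p A f i = T * mat_vec p At w i / (2 * d * sqrt n)"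
      by simp
    have pos: "0 < T / (2 * real n)" using T n by simp
    with mu have mu_pos: "0 < T * mat_vec p A f i" by linarith
    have "(T * mat_vec p A g i - T * mat_vec p A f i)\<^sup>2 / (T * mat_vec p A f i)
        \<le> (T * mat_vec p A g i - T * mat_vec p A f i)\<^sup>2 / (T / (2 * real n))"
      by (rule divide_left_mono[OF mu zero_le_power2 mult_pos_pos[OF mu_pos pos]])
    also have "\<dots> = T / (2 * d\<^sup>2) * (mat_vec p At w i)\<^sup>2"
    proof -
      have cancel: "(T * v / (2 * d * r))\<^sup>2 / (T / (2 * (r * r))) = T / (2 * d\<^sup>2) * v\<^sup>2"
        if "d \<noteq> 0" "r \<noteq> 0" for v d r :: real
        using that T by (simp add: field_simps power2_eq_square)
      have "d \<noteq> 0" using a_lt by (simp add: d_def)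
      from cancel[OF this, of "sqrt n" "mat_vec p At w i"] show ?thesis
        unfolding diff rn(2) using rn(1) by simp
    qed
    finally show ?thesis .
  qed
  have "(\<Sum>i<n. (T * mat_vec p A g i - T * mat_vec p A f i)\<^sup>2 / (T * mat_vec p A f i))
      \<le> (\<Sum>i<n. T / (2 * d\<^sup>2) * (mat_vec p At w i)\<^sup>2)"
    using term_le by (intro sum_mono) auto
  then show ?thesis unfolding sqnorm_def d_def w_def by (simp add: sum_distrib_left)
qed

lemma exp_ln_div_8_le_half:
  fixes x :: real
  assumes "4 \<le> x"
  shows "exp (ln x / 8) \<le> x / 2"
proof -
  have "ln 4 = ln 2 + ln (2::real)" using ln_mult[of 2 2] by simp
  moreover have "ln 4 \<le> ln x" using assms by simp
  moreover have "0 < ln (2::real)" by simp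
  moreover have "ln (x / 2) = ln x - ln 2" using assms by (simp add: ln_div)
  ultimately have "ln x / 8 \<le> ln (x / 2)" by linarith
  then have "exp (ln x / 8) \<le> exp (ln (x / 2))" by simp
  also have "\<dots> = x / 2" using assms by simp
  finally show ?thesis .
qed

lemma chi_square_basis_vec_uniform_le:
  fixes m n s :: nat and T a_l a_u \<delta> :: real and A At :: "nat \<Rightarrow> nat \<Rightarrow> real"
  assumes p: "p = 2 ^ m" and n_pos: "n \<ge> 1" and T_pos: "T > 0" and ms: "m \<le> s"
    and a_lt: "a_l < a_u"
    and At_bounds: "\<forall>i<n. \<forall>j<p. a_l / sqrt n \<le> At i j \<and> At i j \<le> a_u / sqrt n"
    and A_def: "\<forall>i<n. \<forall>j<p. A i j = (At i j + (a_u - 2 * a_l) / sqrt n) / (2 * (a_u - a_l) * sqrt n)"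
    and delta: "0 \<le> \<delta>"
    and RIP: "\<forall>u. l0 p u \<le> 2 * s \<longrightarrow>
                 sqnorm n (mat_vec p At (mat_vec p (haar m) u)) \<le> (1 + \<delta>) * sqnorm p u"
    and T_le: "T \<le> (a_u - a_l)\<^sup>2 * ln (real p) / (4 * (1 + \<delta>))"
    and k: "k < p"
  shows "(\<Sum>i<n. (T * mat_vec p A (basis_vec k) i - T * mat_vec p A (\<lambda>_. 1 / real p) i)\<^sup>2
      / (T * mat_vec p A (\<lambda>_. 1 / real p) i)) \<le> ln (real p) / 8"
proof -
  define f0 :: "nat \<Rightarrow> real" where "f0 = (\<lambda>_. 1 / real p)"
  obtain u where u: "l0 p u \<le> m" "sqnorm p u \<le> 1"
    "\<And>i. i < p \<Longrightarrow> mat_vec p (haar m) u i = basis_vec k i - f0 i"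
    using haar_basis_vec_minus_uniform[of k m] k unfolding p f0_def by auto
  have "mat_vec p At (\<lambda>j. basis_vec k j - f0 j) = mat_vec p At (mat_vec p (haar m) u)"
    unfolding mat_vec_def[of p At] using u(3) by simp
  then have "sqnorm n (mat_vec p At (\<lambda>j. basis_vec k j - f0 j)) \<le> (1 + \<delta>) * sqnorm p u"
    using RIP u(1) ms by simp
  also have "\<dots> \<le> 1 + \<delta>" using u(2) delta by simp
  finally have rip: "sqnorm n (mat_vec p At (\<lambda>j. basis_vec k j - f0 j)) \<le> 1 + \<delta>" .
  have "(\<Sum>i<n. (T * mat_vec p A (basis_vec k) i - T * mat_vec p A f0 i)\<^sup>2 / (T * mat_vec p A f0 i))
      \<le> T / (2 * (a_u - a_l)\<^sup>2) * sqnorm n (mat_vec p At (\<lambda>j. basis_vec k j - f0 j))"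
    using k p by (intro poisson_rates_chi_square_le[OF n_pos a_lt T_pos At_bounds A_def])
      (simp_all add: f0_def basis_vec_def)
  also have "\<dots> \<le> T / (2 * (a_u - a_l)\<^sup>2) * (1 + \<delta>)"
    using rip T_pos by (intro mult_left_mono) auto
  also have "\<dots> \<le> ln (real p) / 8"
    using T_le delta a_lt by (simp add: field_simps)
  finally show ?thesis unfolding f0_def .
qed

lemma obs_pmf_basis_vec_change_of_measure:
  fixes m n s :: nat and T a_l a_u \<delta> :: real and A At :: "nat \<Rightarrow> nat \<Rightarrow> real"
  assumes p: "p = 2 ^ m" and n_pos: "n \<ge> 1" and p_ge: "p \<ge> 4" and T_pos: "T > 0" and ms: "m \<le> s"
    and a_lt: "a_l < a_u"
    and At_bounds: "\<forall>i<n. \<forall>j<p. a_l / sqrt n \<le> At i j \<and> At i j \<le> a_u / sqrt n"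
    and A_def: "\<forall>i<n. \<forall>j<p. A i j = (At i j + (a_u - 2 * a_l) / sqrt n) / (2 * (a_u - a_l) * sqrt n)"
    and delta: "0 \<le> \<delta>"
    and RIP: "\<forall>u. l0 p u \<le> 2 * s \<longrightarrow>
                 sqnorm n (mat_vec p At (mat_vec p (haar m) u)) \<le> (1 + \<delta>) * sqnorm p u"
    and T_le: "T \<le> (a_u - a_l)\<^sup>2 * ln (real p) / (4 * (1 + \<delta>))"
    and k: "k < p"
  shows "measure (obs_pmf n p T A (basis_vec k)) S
    \<le> real p / 2 * measure (obs_pmf n p T A (\<lambda>_. 1 / real p)) S + 1 / 4"
proof -
  define lam where "lam i = T * mat_vec p A (basis_vec k) i" for i
  define mu where "mu i = T * mat_vec p A (\<lambda>_. 1 / real p) i" for i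
  have rate_pos: "0 < T * mat_vec p A g i" if "i < n" "\<forall>j<p. 0 \<le> g j" "(\<Sum>j<p. g j) = 1" for g i
  proof -
    have "0 < 1 / (2 * real n)" using n_pos by simp
    also have "\<dots> \<le> mat_vec p A g i" using design_mat_vec_ge[OF n_pos a_lt _ At_bounds A_def] that by blast
    finally show ?thesis using T_pos by simp
  qed
  have "exp (\<Sum>i<n. (lam i - mu i)\<^sup>2 / mu i) \<le> exp (ln (real p) / 8)"
    using chi_square_basis_vec_uniform_le[OF p n_pos T_pos ms a_lt At_bounds A_def delta RIP T_le k]
    unfolding lam_def mu_def by simp
  also have "\<dots> \<le> real p / 2" using exp_ln_div_8_le_half[of "real p"] p_ge by simp
  finally have "exp (\<Sum>i<n. (lam i - mu i)\<^sup>2 / mu i) / (2 * real p) \<le> 1 / 4"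
    using p_ge by (simp add: divide_le_eq)
  moreover have "measure (obs_pmf n p T A (basis_vec k)) S \<le> real p / 2 * measure (obs_pmf n p T A (\<lambda>_. 1 / real p)) S
      + exp (\<Sum>i<n. (lam i - mu i)\<^sup>2 / mu i) / (2 * real p)"
    unfolding obs_pmf_def lam_def mu_def using k p_ge
    by (intro measure_Pi_poisson_le) (auto intro: rate_pos simp: basis_vec_def)
  ultimately show ?thesis by simp
qed

theorem lemma2:
  fixes m n s :: nat and T a_l a_u \<delta> :: real
    and A At :: "nat \<Rightarrow> nat \<Rightarrow> real"
  defines "p \<equiv> 2 ^ m"
  defines "D \<equiv> haar m"
  assumes n_pos: "n \<ge> 1"
    and p_ge: "p \<ge> 4"
    and T_pos: "T > 0"
    and s_ge: "real s \<ge> log 2 (real p)"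
    and a_lt: "a_l < a_u"
    and At_bounds: "\<forall>i<n. \<forall>j<p. a_l / sqrt n \<le> At i j \<and> At i j \<le> a_u / sqrt n"
    and A_def: "\<forall>i<n. \<forall>j<p. A i j = (At i j + (a_u - 2 * a_l) / sqrt n) / (2 * (a_u - a_l) * sqrt n)"
    and delta: "0 \<le> \<delta>" "\<delta> < 1"
    and RIP: "\<forall>u. l0 p u \<le> 2 * s \<longrightarrow>
                 sqnorm n (mat_vec p At (mat_vec p D u)) \<le> (1 + \<delta>) * sqnorm p u"
    and T_le: "T \<le> (a_u - a_l)\<^sup>2 * ln (real p) / (4 * (1 + \<delta>))"
  shows "(INF fhat. SUP f \<in> fclass p s D. risk n p T A fhat f) \<ge> 1 / 8"
proof (rule INF_greatest)
  fix fhat :: "(nat \<Rightarrow> nat) \<Rightarrow> nat \<Rightarrow> real"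
  have p: "p = 2 ^ m" by (simp add: p_def)
  have ms: "m \<le> s" using s_ge by (simp add: p log_nat_power)
  note change = obs_pmf_basis_vec_change_of_measure[OF p n_pos p_ge T_pos ms a_lt At_bounds A_def
      delta(1) RIP[unfolded D_def] T_le]
  obtain k where k: "k < p"
    and bound: "1 / 8 \<le> (\<integral>\<^sup>+ y. ennreal (sqnorm p (\<lambda>j. fhat y j - basis_vec k j))
                     \<partial>measure_pmf (obs_pmf n p T A (basis_vec k)))"
    using minimax_lower_bound_change_of_measure[where P = "\<lambda>k. obs_pmf n p T A (basis_vec k)"
        and Q = "obs_pmf n p T A (\<lambda>_. 1 / real p)", OF _ change] p_ge by auto
  from bound have "1 / 8 \<le> risk n p T A fhat (basis_vec k)" unfolding risk_def .
  also have "\<dots> \<le> (SUP f \<in> fclass p s D. risk n p T A fhat f)"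
    using haar_basis_vec_in_fclass[OF ms] k unfolding p D_def by (intro SUP_upper) auto
  finally show "1 / 8 \<le> (SUP f \<in> fclass p s D. risk n p T A fhat f)" .
qed

end
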